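(* Let ${\mathbf{X}}\in\mathbb{R}_+^{m\times n}$, let ${\mathbf{A}}\in\mathbb{R}^{k\times m}$ be arbitrary, let $\lambda\in[0,1]$ and $\sigma\ge\max_{a,b}\big(({\mathbf{A}}^T{\mathbf{A}})_{ab}\big)_-$. Then for entrywise nonnegative ${\mathbf{U}}\in\mathbb{R}^{m\times r}$, ${\mathbf{V}}\in\mathbb{R}^{n\times r}$ (with denominators below entrywise positive), the objective $$\|{\mathbf{A}}({\mathbf{X}}-{\mathbf{U}}{\mathbf{V}}^T)\|_F^2+\lambda\|{\mathbf{U}}{\mathbf{V}}^T\|_F^2+\sigma\|\mathbf{1}^T({\mathbf{X}}-{\mathbf{U}}{\mathbf{V}}^T)\|_2^2$$ does not increase under each of the updates $${\mathbf{U}}\leftarrow{\mathbf{U}}\circ\frac{{\mathbf{A}}^T{\mathbf{A}}{\mathbf{X}}{\mathbf{V}}+\sigma\mathbf{1}\mathbf{1}^T{\mathbf{X}}{\mathbf{V}}}{{\mathbf{A}}^T{\mathbf{A}}{\mathbf{U}}{\mathbf{V}}^T{\mathbf{V}}+\sigma\mathbf{1}\mathbf{1}^T{\mathbf{U}}{\mathbf{V}}^T{\mathbf{V}}+\lambda{\mathbf{U}}{\mathbf{V}}^T{\mathbf{V}}},\qquad {\mathbf{V}}\leftarrow{\mathbf{V}}\circ\frac{{\mathbf{X}}^T{\mathbf{A}}^T{\mathbf{A}}{\mathbf{U}}+\sigma{\mathbf{X}}^T\mathbf{1}\mathbf{1}^T{\mathbf{U}}}{{\mathbf{V}}{\mathbf{U}}^T{\mathbf{A}}^T{\mathbf{A}}{\mathbf{U}}+\sigma{\mathbf{V}}{\mathbf{U}}^T\mathbf{1}\mathbf{1}^T{\mathbf{U}}+\lambda{\mathbf{V}}{\mathbf{U}}^T{\mathbf{U}}},$$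 and the updated factors remain entrywise nonnegative.
   Context: $\mathbf{1}\in\mathbb{R}^m$ is the all-ones vector; $(x)_-=-\min(x,0)$; $\circ$ is entrywise product and the fraction bar is entrywise division; $\mathbb{R}_+^{m\times n}$ denotes entrywise nonnegative matrices. $\|\cdot\|_F$ is the Frobenius norm, $\|\cdot\|_2$ the Euclidean norm. *)

theory Defs
  imports "HOL-Analysis.Analysis"
begin

text \<open>Matrices are Cartesian-product types: an m-by-n real matrix is real^'n^'m
  (rows indexed by 'm, columns by 'n).\<close>

definition negpart :: "real \<Rightarrow> real" where
  "negpart x = - min x 0"

definition ones :: "real^'m" where
  "ones = (\<chi> i. 1)"

definition frob_sq :: "real^'n^'m \<Rightarrow> real" where
  "frob_sq M = (\<Sum>i\<in>UNIV. \<Sum>j\<in>UNIV. (M $ i $ j)^2)"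

definition had :: "real^'n^'m \<Rightarrow> real^'n^'m \<Rightarrow> real^'n^'m" where
  "had M N = (\<chi> i j. M $ i $ j * N $ i $ j)"

definition ediv :: "real^'n^'m \<Rightarrow> real^'n^'m \<Rightarrow> real^'n^'m" where
  "ediv M N = (\<chi> i j. M $ i $ j / N $ i $ j)"

definition nonneg_mat :: "real^'n^'m \<Rightarrow> bool" where
  "nonneg_mat M \<longleftrightarrow> (\<forall>i j. 0 \<le> M $ i $ j)"

definition pos_mat :: "real^'n^'m \<Rightarrow> bool" where
  "pos_mat M \<longleftrightarrow> (\<forall>i j. 0 < M $ i $ j)"

definition J :: "real^'m^'m" where
  "J = (\<chi> i j. 1)"

definition objective ::
  "real^'m^'k \<Rightarrow> real^'n^'m \<Rightarrow> real \<Rightarrow> real \<Rightarrow> real^'r^'m \<Rightarrow> real^'r^'n \<Rightarrow> real" where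
  "objective A X lam sig U V =
     frob_sq (A ** (X - U ** transpose V))
     + lam * frob_sq (U ** transpose V)
     + sig * (norm (ones v* (X - U ** transpose V)))^2"

definition U_num :: "real^'m^'k \<Rightarrow> real^'n^'m \<Rightarrow> real \<Rightarrow> real \<Rightarrow> real^'r^'m \<Rightarrow> real^'r^'n \<Rightarrow> real^'r^'m" where
  "U_num A X lam sig U V = transpose A ** A ** X ** V + sig *\<^sub>R (J ** X ** V)"

definition U_den :: "real^'m^'k \<Rightarrow> real^'n^'m \<Rightarrow> real \<Rightarrow> real \<Rightarrow> real^'r^'m \<Rightarrow> real^'r^'n \<Rightarrow> real^'r^'m" where
  "U_den A X lam sig U V =
     transpose A ** A ** U ** transpose V ** V + sig *\<^sub>R (J ** U ** transpose V ** V)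
     + lam *\<^sub>R (U ** transpose V ** V)"

definition V_num :: "real^'m^'k \<Rightarrow> real^'n^'m \<Rightarrow> real \<Rightarrow> real \<Rightarrow> real^'r^'m \<Rightarrow> real^'r^'n \<Rightarrow> real^'r^'n" where
  "V_num A X lam sig U V = transpose X ** transpose A ** A ** U + sig *\<^sub>R (transpose X ** J ** U)"

definition V_den :: "real^'m^'k \<Rightarrow> real^'n^'m \<Rightarrow> real \<Rightarrow> real \<Rightarrow> real^'r^'m \<Rightarrow> real^'r^'n \<Rightarrow> real^'r^'n" where
  "V_den A X lam sig U V =
     V ** transpose U ** transpose A ** A ** U + sig *\<^sub>R (V ** transpose U ** J ** U)
     + lam *\<^sub>R (V ** transpose U ** U)"

definition U_update where
  "U_update A X lam sig U V = had U (ediv (U_num A X lam sig U V) (U_den A X lam sig U V))"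

definition V_update where
  "V_update A X lam sig U V = had V (ediv (V_num A X lam sig U V) (V_den A X lam sig U V))"

end

theory Submission
  imports Defs
begin

text \<open>Write G = A^T A + \<sigma> 1 1^T, which is entrywise nonnegative by the choice of \<sigma>, and
  M = G + \<lambda> I. With E = X - U V^T the objective is \<langle>G E, E\<rangle> + \<lambda> \<langle>U V^T, U V^T\<rangle>, so moving U
  to U + D changes it by 2 \<langle>M U W - G X V, D\<rangle> + \<langle>M D W, D\<rangle> with W = V^T V, and M U W is
  exactly the denominator of the U-update. For symmetric nonnegative M, W and nonnegative U
  the quadratic term is at most \<Sum> D^2 (M U W) / U (the Lee-Seung auxiliary function, which
  is AM-GM entry by entry). For the multiplicative step D = U (N / (M U W) - 1) the resulting
  bound collapses entrywise to -U (N - M U W)^2 / (M U W) \<le> 0. The V-update is the same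
  argument with M = I and W = U^T M U.\<close>

lemma matrix_add_rdistrib: "((A::'a::semiring_1^'n^'m) + B) ** C = A ** C + B ** C"
  by (simp add: matrix_matrix_mult_def vec_eq_iff algebra_simps sum.distrib)

lemma matrix_diff_rdistrib: "((A::'a::ring_1^'n^'m) - B) ** C = A ** C - B ** C"
  by (simp add: matrix_matrix_mult_def vec_eq_iff algebra_simps sum_subtractf)

lemma matrix_diff_ldistrib: "(A::'a::ring_1^'n^'m) ** (B - C) = A ** B - A ** C"
  by (simp add: matrix_matrix_mult_def vec_eq_iff algebra_simps sum_subtractf)

lemma transpose_add: "transpose ((A::'a::plus^'n^'m) + B) = transpose A + transpose B"
  by (simp add: transpose_def vec_eq_iff)

lemma transpose_diff: "transpose ((A::'a::minus^'n^'m) - B) = transpose A - transpose B"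
  by (simp add: transpose_def vec_eq_iff)

lemma inner_matrix: "inner (P::real^'n^'m) Q = (\<Sum>i\<in>UNIV. \<Sum>j\<in>UNIV. P$i$j * Q$i$j)"
  by (simp add: inner_vec_def)

lemma inner_matrix_mult_left: "inner ((A::real^'m^'k) ** P) Q = inner P (transpose A ** Q)"
proof -
  have "inner (A ** P) Q = (\<Sum>i\<in>UNIV. \<Sum>j\<in>UNIV. \<Sum>k\<in>UNIV. A$i$k * P$k$j * Q$i$j)"
    by (simp add: inner_matrix matrix_matrix_mult_def sum_distrib_right)
  also have "\<dots> = (\<Sum>k\<in>UNIV. \<Sum>j\<in>UNIV. \<Sum>i\<in>UNIV. A$i$k * P$k$j * Q$i$j)"
    by (subst sum.swap, subst (2) sum.swap) (rule sum.swap)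
  also have "\<dots> = inner P (transpose A ** Q)"
    by (simp add: inner_matrix matrix_matrix_mult_def transpose_def sum_distrib_left mult_ac)
  finally show ?thesis .
qed

lemma inner_transpose: "inner (transpose P) (transpose (Q::real^'n^'m)) = inner P Q"
  by (simp add: inner_matrix transpose_def) (rule sum.swap)

lemma inner_matrix_mult_right: "inner ((P::real^'m^'k) ** B) Q = inner P (Q ** transpose B)"
proof -
  have "inner (P ** B) Q = inner (transpose B ** transpose P) (transpose Q)"
    by (simp only: inner_transpose[of "P ** B" Q, symmetric] matrix_transpose_mul)
  also have "\<dots> = inner (transpose P) (transpose (Q ** transpose B))"
    by (simp add: inner_matrix_mult_left matrix_transpose_mul)
  finally show ?thesis
    by (simp only: inner_transpose)
qed

lemma frob_sq_eq_inner: "frob_sq P = inner P P"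
  by (simp add: frob_sq_def inner_matrix power2_eq_square)

lemma norm_ones_vector_matrix_sq: "(norm (ones v* P))^2 = inner (J ** P) P"
proof -
  have "(norm (ones v* P))^2 = (\<Sum>j\<in>UNIV. (\<Sum>i\<in>UNIV. P$i$j) * (\<Sum>k\<in>UNIV. P$k$j))"
    by (simp add: power2_norm_eq_inner inner_vec_def vector_matrix_mult_def ones_def)
  also have "\<dots> = (\<Sum>j\<in>UNIV. \<Sum>i\<in>UNIV. (\<Sum>k\<in>UNIV. P$k$j) * P$i$j)"
    by (simp add: sum_distrib_right mult.commute)
  also have "\<dots> = inner (J ** P) P"
    by (simp add: inner_matrix matrix_matrix_mult_def J_def) (rule sum.swap)
  finally show ?thesis .
qed

lemma inner_sym_matrix_mult_right:
  fixes M :: "real^'m^'m"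
  assumes "transpose M = M"
  shows "inner (M ** (D ** B)) (D ** B) = inner (M ** D ** (B ** transpose B)) D"
proof -
  have "inner (M ** (D ** B)) (D ** B) = inner (D ** B) (M ** D ** B)"
    by (subst inner_matrix_mult_left) (simp add: assms matrix_mul_assoc)
  also have "\<dots> = inner (M ** D ** (B ** transpose B)) D"
    by (subst inner_matrix_mult_right) (simp add: inner_commute matrix_mul_assoc)
  finally show ?thesis .
qed

lemma inner_sym_matrix_mult_left:
  fixes M :: "real^'m^'m"
  assumes "transpose M = M"
  shows "inner (M ** (U ** transpose D)) (U ** transpose D) = inner (D ** (transpose U ** M ** U)) D"
proof -
  have "inner (M ** (U ** transpose D)) (U ** transpose D)
      = inner (D ** (transpose U ** M)) (D ** transpose U)"
    using assms inner_transpose[of "M ** (U ** transpose D)" "U ** transpose D"]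
    by (simp add: matrix_transpose_mul matrix_mul_assoc)
  also have "\<dots> = inner (D ** (transpose U ** M ** U)) D"
    by (subst inner_matrix_mult_right) (simp add: assms inner_commute matrix_transpose_mul matrix_mul_assoc)
  finally show ?thesis .
qed

lemma nonneg_mat_mult: "nonneg_mat (P::real^'n^'m) \<Longrightarrow> nonneg_mat Q \<Longrightarrow> nonneg_mat (P ** Q)"
  by (simp add: nonneg_mat_def matrix_matrix_mult_def sum_nonneg)

lemma nonneg_mat_transpose: "nonneg_mat (P::real^'n^'m) \<Longrightarrow> nonneg_mat (transpose P)"
  by (simp add: nonneg_mat_def transpose_def)

lemma nonneg_mat_add_scaled_identity:
  "nonneg_mat (P::real^'n^'n) \<Longrightarrow> 0 \<le> c \<Longrightarrow> nonneg_mat (P + c *\<^sub>R mat 1)"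
  by (simp add: nonneg_mat_def mat_def)

lemma cross_term_le_weighted_squares:
  fixes x y u v :: real
  assumes "0 < u" "0 < v"
  shows "x * y \<le> (x^2 * v / u + y^2 * u / v) / 2"
proof -
  have "(x^2 * v / u + y^2 * u / v) / 2 - x * y = (x * v - y * u)^2 / (2 * u * v)"
    using assms by (simp add: field_simps power2_eq_square)
  also have "\<dots> \<ge> 0"
    using assms by simp
  finally show ?thesis by simp
qed

lemma quadratic_form_le_weighted_squares:
  fixes C :: "'p::finite \<Rightarrow> 'p \<Rightarrow> real" and u d :: "'p \<Rightarrow> real"
  assumes C_nonneg: "\<And>p q. 0 \<le> C p q" and C_sym: "\<And>p q. C p q = C q p"
    and u_nonneg: "\<And>p. 0 \<le> u p" and d_supp: "\<And>p. u p = 0 \<Longrightarrow> d p = 0"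
  shows "(\<Sum>p\<in>UNIV. \<Sum>q\<in>UNIV. C p q * d p * d q)
           \<le> (\<Sum>p\<in>UNIV. d p^2 / u p * (\<Sum>q\<in>UNIV. C p q * u q))"
proof -
  define h where "h p q = d p^2 / u p * (C p q * u q) / 2" for p q
  have term_le: "C p q * d p * d q \<le> h p q + h q p" for p q
  proof (cases "u p = 0 \<or> u q = 0")
    case True
    \<comment> \<open>both sides vanish: d p = 0 or d q = 0, and the division by zero yields 0\<close>
    then show ?thesis using d_supp by (auto simp: h_def)
  next
    case False
    then have "0 < u p" "0 < u q" using u_nonneg by (auto simp: order_le_less)
    then have "d p * d q \<le> (d p^2 * u q / u p + d q^2 * u p / u q) / 2"
      by (rule cross_term_le_weighted_squares)
    then have "C p q * (d p * d q) \<le> C p q * ((d p^2 * u q / u p + d q^2 * u p / u q) / 2)"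
      by (rule mult_left_mono) (rule C_nonneg)
    then show ?thesis by (simp add: h_def C_sym[of q p] algebra_simps add_divide_distrib)
  qed
  have "(\<Sum>p\<in>UNIV. \<Sum>q\<in>UNIV. C p q * d p * d q) \<le> (\<Sum>p\<in>UNIV. \<Sum>q\<in>UNIV. h p q + h q p)"
    by (intro sum_mono term_le)
  also have "\<dots> = 2 * (\<Sum>p\<in>UNIV. \<Sum>q\<in>UNIV. h p q)"
    using sum.swap[of "\<lambda>q p. h p q" UNIV UNIV] by (simp only: sum.distrib mult_2)
  also have "\<dots> = (\<Sum>p\<in>UNIV. d p^2 / u p * (\<Sum>q\<in>UNIV. C p q * u q))"
    by (simp add: h_def sum_distrib_left)
  finally show ?thesis .
qed

lemma sum_UNIV_prod:
  "(\<Sum>p\<in>(UNIV::('a::finite \<times> 'b::finite) set). f p) = (\<Sum>a\<in>UNIV. \<Sum>b\<in>UNIV. f (a, b))"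
  by (simp add: sum.cartesian_product UNIV_Times_UNIV[symmetric] del: UNIV_Times_UNIV)

lemma matrix_mult_three_entry:
  "((M::real^'m^'m) ** Y ** (W::real^'r^'r)) $ a $ i = (\<Sum>b\<in>UNIV. \<Sum>j\<in>UNIV. M$a$b * W$j$i * Y$b$j)"
proof -
  have "(M ** Y ** W) $ a $ i = (\<Sum>j\<in>UNIV. \<Sum>b\<in>UNIV. M$a$b * W$j$i * Y$b$j)"
    by (simp add: matrix_matrix_mult_def sum_distrib_left sum_distrib_right mult_ac)
  then show ?thesis
    by (simp add: sum.swap[of _ "UNIV::'r set"])
qed

lemma inner_matrix_sandwich_le_weighted_squares:
  fixes M :: "real^'m^'m" and W :: "real^'r^'r" and D U :: "real^'r^'m"
  assumes "nonneg_mat M" "nonneg_mat W" "transpose M = M" "transpose W = W"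
    and "nonneg_mat U" "\<And>a i. U$a$i = 0 \<Longrightarrow> D$a$i = 0"
  shows "inner (M ** D ** W) D \<le> (\<Sum>a\<in>UNIV. \<Sum>i\<in>UNIV. (D$a$i)^2 / U$a$i * (M ** U ** W)$a$i)"
proof -
  define C :: "'m \<times> 'r \<Rightarrow> 'm \<times> 'r \<Rightarrow> real"
    where "C p q = M $ fst p $ fst q * W $ snd q $ snd p" for p q
  have M_sym: "M$a$b = M$b$a" for a b
    using assms(3) by (metis transpose_def vec_lambda_beta)
  have W_sym: "W$i$j = W$j$i" for i j
    using assms(4) by (metis transpose_def vec_lambda_beta)
  have "inner (M ** D ** W) D
      = (\<Sum>p\<in>UNIV. \<Sum>q\<in>UNIV. C p q * D $ fst p $ snd p * D $ fst q $ snd q)"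
    by (simp add: inner_matrix matrix_mult_three_entry sum_UNIV_prod C_def sum_distrib_left mult_ac)
  also have "\<dots> \<le> (\<Sum>p\<in>UNIV. (D $ fst p $ snd p)^2 / U $ fst p $ snd p
                       * (\<Sum>q\<in>UNIV. C p q * U $ fst q $ snd q))"
    by (rule quadratic_form_le_weighted_squares)
      (use assms M_sym W_sym in \<open>auto simp: C_def nonneg_mat_def\<close>)
  also have "\<dots> = (\<Sum>a\<in>UNIV. \<Sum>i\<in>UNIV. (D$a$i)^2 / U$a$i * (M ** U ** W)$a$i)"
    by (simp add: matrix_mult_three_entry sum_UNIV_prod C_def)
  finally show ?thesis .
qed

lemma multiplicative_step_entry:
  fixes m n u :: real
  assumes "0 < m" "0 \<le> u"
  shows "2 * ((m - n) * (u * (n / m) - u)) + (u * (n / m) - u)^2 / u * m \<le> 0"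
proof (cases "u = 0")
  case False
  have "2 * ((m - n) * (u * (n / m) - u)) + (u * (n / m) - u)^2 / u * m = - (u * (n - m)^2 / m)"
    using False assms by (simp add: field_simps power2_eq_square)
  also have "\<dots> \<le> 0"
    using assms by simp
  finally show ?thesis .
qed simp

lemma multiplicative_update_descent:
  fixes M :: "real^'m^'m" and W :: "real^'r^'r" and U N :: "real^'r^'m"
  assumes M: "nonneg_mat M" "transpose M = M" and W: "nonneg_mat W" "transpose W = W"
    and U: "nonneg_mat U" and N: "nonneg_mat N" and pos: "pos_mat (M ** U ** W)"
  defines "U' \<equiv> had U (ediv N (M ** U ** W))"
  shows "nonneg_mat U'"
    and "2 * inner (M ** U ** W - N) (U' - U) + inner (M ** (U' - U) ** W) (U' - U) \<le> 0"
proof -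
  define Dn where "Dn = M ** U ** W"
  define D where "D = U' - U"
  have D_entry: "D$a$i = U$a$i * (N$a$i / Dn$a$i) - U$a$i" for a i
    by (simp add: D_def U'_def Dn_def had_def ediv_def)
  have Dn_pos: "0 < Dn$a$i" for a i
    using pos by (simp add: Dn_def pos_mat_def)
  show "nonneg_mat U'"
    using U N Dn_pos unfolding U'_def Dn_def nonneg_mat_def had_def ediv_def
    by (auto intro!: mult_nonneg_nonneg divide_nonneg_pos)
  have "inner (M ** D ** W) D \<le> (\<Sum>a\<in>UNIV. \<Sum>i\<in>UNIV. (D$a$i)^2 / U$a$i * Dn$a$i)"
    unfolding Dn_def using M W U by (intro inner_matrix_sandwich_le_weighted_squares) (auto simp: D_entry)
  moreover have "2 * inner (Dn - N) D + (\<Sum>a\<in>UNIV. \<Sum>i\<in>UNIV. (D$a$i)^2 / U$a$i * Dn$a$i)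
      = (\<Sum>a\<in>UNIV. \<Sum>i\<in>UNIV. 2 * ((Dn$a$i - N$a$i) * D$a$i) + (D$a$i)^2 / U$a$i * Dn$a$i)"
    by (simp add: inner_matrix sum.distrib sum_distrib_left)
  moreover have "\<dots> \<le> 0"
    unfolding D_entry using U Dn_pos
    by (intro sum_nonpos multiplicative_step_entry) (auto simp: nonneg_mat_def)
  ultimately show "2 * inner (M ** U ** W - N) (U' - U) + inner (M ** (U' - U) ** W) (U' - U) \<le> 0"
    by (simp add: D_def Dn_def)
qed

definition shifted_gram :: "real^'m^'k \<Rightarrow> real \<Rightarrow> real^'m^'m" where
  "shifted_gram A sig = transpose A ** A + sig *\<^sub>R J"

text \<open>Half the Hessian of the objective as a function of Z = U V^T.\<close>

definition half_hessian :: "real^'m^'k \<Rightarrow> real \<Rightarrow> real \<Rightarrow> real^'m^'m" where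
  "half_hessian A lam sig = shifted_gram A sig + lam *\<^sub>R mat 1"

lemma shifted_gram_symmetric:
  fixes A :: "real^'m^'k"
  shows "transpose (shifted_gram A sig) = shifted_gram A sig"
proof -
  have "transpose J = (J :: real^'m^'m)"
    by (simp add: transpose_def J_def)
  then show ?thesis
    by (simp add: shifted_gram_def transpose_add transpose_scalar matrix_transpose_mul)
qed

lemma half_hessian_symmetric: "transpose (half_hessian A lam sig) = half_hessian A lam sig"
  by (simp add: half_hessian_def transpose_add transpose_scalar shifted_gram_symmetric)

lemma shifted_gram_nonneg:
  fixes A :: "real^'m^'k"
  assumes "sig \<ge> Max ((\<lambda>(a, b). negpart ((transpose A ** A) $ a $ b)) ` UNIV)"
  shows "nonneg_mat (shifted_gram A sig)"
  unfolding nonneg_mat_def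
proof (intro allI)
  fix a b
  have "negpart ((transpose A ** A) $ a $ b) \<le> Max ((\<lambda>(a, b). negpart ((transpose A ** A) $ a $ b)) ` UNIV)"
    by (rule Max_ge) (auto intro: image_eqI[where x = "(a, b)"])
  with assms have "negpart ((transpose A ** A) $ a $ b) \<le> sig"
    by linarith
  then show "0 \<le> shifted_gram A sig $ a $ b"
    by (auto simp: shifted_gram_def J_def negpart_def min_def split: if_splits)
qed

lemma objective_eq_inner:
  fixes A :: "real^'m^'k" and X :: "real^'n^'m"
  shows "objective A X lam sig U V
     = inner (shifted_gram A sig ** (X - U ** transpose V)) (X - U ** transpose V)
       + lam * inner (U ** transpose V) (U ** transpose V)"
proof -
  have "frob_sq (A ** E) = inner (transpose A ** A ** E) E" for E :: "real^'n^'m"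
    by (simp add: frob_sq_eq_inner inner_matrix_mult_left matrix_mul_assoc matrix_transpose_mul)
  then show ?thesis
    by (simp add: objective_def frob_sq_eq_inner norm_ones_vector_matrix_sq shifted_gram_def
        matrix_add_rdistrib scalar_matrix_assoc[symmetric] inner_add_left)
qed

lemma quadratic_objective_increment:
  fixes G :: "real^'m^'m" and X Z Y :: "real^'n^'m"
  assumes G: "transpose G = G"
  shows "inner (G ** (X - (Z + Y))) (X - (Z + Y)) + lam * inner (Z + Y) (Z + Y)
       = inner (G ** (X - Z)) (X - Z) + lam * inner Z Z
         + 2 * inner ((G + lam *\<^sub>R mat 1) ** Z - G ** X) Y + inner ((G + lam *\<^sub>R mat 1) ** Y) Y"
proof -
  have G_adj: "inner (G ** P) Q = inner (G ** Q) P" for P Q :: "real^'n^'m"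
    by (metis G inner_commute inner_matrix_mult_left)
  have "X - (Z + Y) = (X - Z) - Y"
    by simp
  then show ?thesis
    by (simp only: matrix_add_ldistrib matrix_diff_ldistrib matrix_add_rdistrib
        scalar_matrix_assoc[symmetric] matrix_mul_lid inner_add_left inner_add_right
        inner_diff_left inner_diff_right inner_scaleR_left inner_scaleR_right
        G_adj[of Y X] G_adj[of Y Z] inner_commute[of Y Z])
      (simp add: algebra_simps)
qed

lemma U_num_eq: "U_num A X lam sig U V = shifted_gram A sig ** X ** V"
  by (simp add: U_num_def shifted_gram_def matrix_add_rdistrib scalar_matrix_assoc[symmetric]
      matrix_mul_assoc)

lemma U_den_eq: "U_den A X lam sig U V = half_hessian A lam sig ** U ** (transpose V ** V)"
  by (simp add: U_den_def half_hessian_def shifted_gram_def matrix_add_rdistrib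
      scalar_matrix_assoc[symmetric] matrix_mul_assoc)

lemma V_num_eq: "V_num A X lam sig U V = transpose X ** shifted_gram A sig ** U"
  by (simp add: V_num_def shifted_gram_def matrix_add_ldistrib matrix_add_rdistrib
      scalar_matrix_assoc[symmetric] matrix_scalar_ac matrix_mul_assoc)

lemma V_den_eq: "V_den A X lam sig U V = V ** (transpose U ** half_hessian A lam sig ** U)"
  by (simp add: V_den_def half_hessian_def shifted_gram_def matrix_add_ldistrib matrix_add_rdistrib
      scalar_matrix_assoc[symmetric] matrix_scalar_ac matrix_mul_assoc)

lemma objective_U_increment:
  fixes A :: "real^'m^'k" and X :: "real^'n^'m" and U D :: "real^'r^'m" and V :: "real^'r^'n"
  shows "objective A X lam sig (U + D) V = objective A X lam sig U V
           + 2 * inner (U_den A X lam sig U V - U_num A X lam sig U V) D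
           + inner (half_hessian A lam sig ** D ** (transpose V ** V)) D"
proof -
  let ?G = "shifted_gram A sig" and ?H = "half_hessian A lam sig"
  let ?P = "?H ** (U ** transpose V) - ?G ** X"
  have "inner ?P (D ** transpose V) = inner (?P ** V) D"
    by (simp add: inner_commute[of ?P] inner_matrix_mult_right)
  also have "?P ** V = U_den A X lam sig U V - U_num A X lam sig U V"
    by (simp add: U_den_eq U_num_eq matrix_diff_rdistrib matrix_mul_assoc)
  finally have linear: "inner ?P (D ** transpose V) = inner (U_den A X lam sig U V - U_num A X lam sig U V) D" .
  have quadratic: "inner (?H ** (D ** transpose V)) (D ** transpose V) = inner (?H ** D ** (transpose V ** V)) D"
    using inner_sym_matrix_mult_right[OF half_hessian_symmetric, where D = D and B = "transpose V"]
    by simp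
  have "(U + D) ** transpose V = U ** transpose V + D ** transpose V"
    by (rule matrix_add_rdistrib)
  then show ?thesis
    using quadratic_objective_increment[OF shifted_gram_symmetric[of A sig],
        where X = X and Z = "U ** transpose V" and Y = "D ** transpose V" and lam = lam]
    by (simp add: objective_eq_inner half_hessian_def[symmetric] linear quadratic)
qed

lemma objective_V_increment:
  fixes A :: "real^'m^'k" and X :: "real^'n^'m" and U :: "real^'r^'m" and V D :: "real^'r^'n"
  shows "objective A X lam sig U (V + D) = objective A X lam sig U V
           + 2 * inner (V_den A X lam sig U V - V_num A X lam sig U V) D
           + inner (D ** (transpose U ** half_hessian A lam sig ** U)) D"
proof -
  let ?G = "shifted_gram A sig" and ?H = "half_hessian A lam sig"
  let ?P = "?H ** (U ** transpose V) - ?G ** X"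
  have "inner ?P (U ** transpose D) = inner (transpose (transpose U ** ?P)) D"
    by (metis inner_commute inner_matrix_mult_left inner_transpose transpose_transpose)
  also have "transpose (transpose U ** ?P) = V_den A X lam sig U V - V_num A X lam sig U V"
    by (simp add: V_den_eq V_num_eq transpose_diff matrix_transpose_mul half_hessian_symmetric
        shifted_gram_symmetric matrix_diff_rdistrib matrix_mul_assoc)
  finally have linear: "inner ?P (U ** transpose D) = inner (V_den A X lam sig U V - V_num A X lam sig U V) D" .
  have "U ** transpose (V + D) = U ** transpose V + U ** transpose D"
    by (simp add: transpose_add matrix_add_ldistrib)
  then show ?thesis
    using quadratic_objective_increment[OF shifted_gram_symmetric[of A sig],
        where X = X and Z = "U ** transpose V" and Y = "U ** transpose D" and lam = lam]
    by (simp add: objective_eq_inner half_hessian_def[symmetric] linear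
        inner_sym_matrix_mult_left[OF half_hessian_symmetric])
qed

lemma half_hessian_nonneg:
  "nonneg_mat (shifted_gram A sig) \<Longrightarrow> 0 \<le> lam \<Longrightarrow> nonneg_mat (half_hessian A lam sig)"
  by (simp add: half_hessian_def nonneg_mat_add_scaled_identity)

lemma U_update_descent:
  fixes A :: "real^'m^'k" and X :: "real^'n^'m" and U :: "real^'r^'m" and V :: "real^'r^'n"
  assumes X: "nonneg_mat X" and lam: "0 \<le> lam" and G: "nonneg_mat (shifted_gram A sig)"
    and U: "nonneg_mat U" and V: "nonneg_mat V" and pos: "pos_mat (U_den A X lam sig U V)"
  shows "objective A X lam sig (U_update A X lam sig U V) V \<le> objective A X lam sig U V
           \<and> nonneg_mat (U_update A X lam sig U V)"
proof -
  let ?H = "half_hessian A lam sig" and ?W = "transpose V ** V"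
  let ?U' = "U_update A X lam sig U V"
  have H: "nonneg_mat ?H" "transpose ?H = ?H"
    using G lam by (simp_all add: half_hessian_nonneg half_hessian_symmetric)
  have W: "nonneg_mat ?W" "transpose ?W = ?W"
    using V by (simp_all add: nonneg_mat_mult nonneg_mat_transpose matrix_transpose_mul)
  have N: "nonneg_mat (U_num A X lam sig U V)"
    using G X V by (simp add: U_num_eq nonneg_mat_mult)
  have U': "?U' = had U (ediv (U_num A X lam sig U V) (?H ** U ** ?W))"
    by (simp add: U_update_def U_den_eq)
  note descent = multiplicative_update_descent[OF H W U N pos[unfolded U_den_eq], folded U']
  have "objective A X lam sig ?U' V = objective A X lam sig U V
      + 2 * inner (?H ** U ** ?W - U_num A X lam sig U V) (?U' - U) + inner (?H ** (?U' - U) ** ?W) (?U' - U)"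
    using objective_U_increment[where U = U and D = "?U' - U"] by (simp add: U_den_eq)
  then show ?thesis
    using descent by simp
qed

lemma V_update_descent:
  fixes A :: "real^'m^'k" and X :: "real^'n^'m" and U :: "real^'r^'m" and V :: "real^'r^'n"
  assumes X: "nonneg_mat X" and lam: "0 \<le> lam" and G: "nonneg_mat (shifted_gram A sig)"
    and U: "nonneg_mat U" and V: "nonneg_mat V" and pos: "pos_mat (V_den A X lam sig U V)"
  shows "objective A X lam sig U (V_update A X lam sig U V) \<le> objective A X lam sig U V
           \<and> nonneg_mat (V_update A X lam sig U V)"
proof -
  let ?I = "mat 1 :: real^'n^'n" and ?W = "transpose U ** half_hessian A lam sig ** U"
  let ?V' = "V_update A X lam sig U V"
  have I: "nonneg_mat ?I" "transpose ?I = ?I"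
    by (simp add: nonneg_mat_def mat_def) simp
  have W: "nonneg_mat ?W" "transpose ?W = ?W"
    using G lam U by (simp_all add: half_hessian_nonneg half_hessian_symmetric nonneg_mat_mult
        nonneg_mat_transpose matrix_transpose_mul matrix_mul_assoc)
  have N: "nonneg_mat (V_num A X lam sig U V)"
    using G X U by (simp add: V_num_eq nonneg_mat_mult nonneg_mat_transpose)
  have V': "?V' = had V (ediv (V_num A X lam sig U V) (?I ** V ** ?W))"
    by (simp add: V_update_def V_den_eq)
  have pos': "pos_mat (?I ** V ** ?W)"
    using pos by (simp add: V_den_eq)
  note descent = multiplicative_update_descent[OF I W V N pos', folded V']
  have "objective A X lam sig U ?V' = objective A X lam sig U V
      + 2 * inner (?I ** V ** ?W - V_num A X lam sig U V) (?V' - V) + inner (?I ** (?V' - V) ** ?W) (?V' - V)"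
    using objective_V_increment[where V = V and D = "?V' - V"] by (simp add: V_den_eq)
  then show ?thesis
    using descent by simp
qed

theorem mainTheorem10:
  fixes X :: "real^'n^'m" and A :: "real^'m^'k"
    and U :: "real^'r^'m" and V :: "real^'r^'n"
    and lam sig :: real
  assumes "nonneg_mat X"
    and "0 \<le> lam" and "lam \<le> 1"
    and "sig \<ge> Max ((\<lambda>(a, b). negpart ((transpose A ** A) $ a $ b)) ` UNIV)"
    and "nonneg_mat U" and "nonneg_mat V"
  shows "(pos_mat (U_den A X lam sig U V) \<longrightarrow>
            objective A X lam sig (U_update A X lam sig U V) V \<le> objective A X lam sig U V
            \<and> nonneg_mat (U_update A X lam sig U V))
       \<and> (pos_mat (V_den A X lam sig U V) \<longrightarrow>
            objective A X lam sig U (V_update A X lam sig U V) \<le> objective A X lam sig U V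
            \<and> nonneg_mat (V_update A X lam sig U V))"
proof -
  have G: "nonneg_mat (shifted_gram A sig)"
    using assms(4) by (rule shifted_gram_nonneg)
  show ?thesis
    using U_update_descent[OF assms(1,2) G assms(5,6)] V_update_descent[OF assms(1,2) G assms(5,6)]
    by blast
qed

end
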